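(* The assignment $\Xi$ is a functor from the category $\mathfrak{S}$ of Bochvar systems to the category $\mathfrak{B}$ of Bochvar algebras. It sends a Bochvar system $\mathbb{B}$ to $\mathbf{A}_{\mathbb{B}}$, and a morphism $g:\langle\mathbf{B}_1,\mathbf{I}_1\rangle\to\langle\mathbf{B}_2,\mathbf{I}_2\rangle$ to the map $\Xi(g)(a/[i))=g(a)/[g(i))$ for $a\in B_1$, $i\in I_1$. In particular, $\Xi(g)$ is a well-defined homomorphism of Bochvar algebras $\mathbf{A}_{\mathbb{B}_1}\to\mathbf{A}_{\mathbb{B}_2}$.
   Context: A Bochvar system is a pair $\langle\mathbf{B},\mathbf{I}\rangle$ with $\mathbf{B}$ a Boolean algebra and $I\subseteq B$ containing $1$ and closed under $\wedge$. A morphism $\langle\mathbf{B}_1,\mathbf{I}_1\rangle\to\langle\mathbf{B}_2,\mathbf{I}_2\rangle$ is a Boolean homomorphism $g$ with $g(I_1)\subseteq I_2$. $\mathbf{WK}^e$ is the three-element algebra on $\{0,\tfrac12,1\}$ of type $\langle\wedge,\vee,\neg,J_2,0,1\rangle$. Its operations are: - $\neg$ swaps $0,1$ and fixes $\tfrac12$; - $\wedge,\vee$ are Boolean on $\{0,1\}$ and return $\tfrac12$ if some argument is $\tfrac12$; - $J_2(1)=1$ and $J_2(\tfrac12)=J_2(0)=0$. Bochvar algebras are the members of $ISP(\mathbf{WK}^e)$. For a Bochvar system $\mathbb{B}=\langle\mathbf{B},\mathbf{I}\rangle$, $\mathbf{A}_{\mathbb{B}}$ is the unique Bochvar algebra whose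 $\{\wedge,\vee,\neg,0,1\}$-reduct is the Płonka sum of the following system: - index join-semilattice $I$ ordered dually to $\mathbf{B}$; - fibres $\mathbf{B}/[i)$, the quotient of $\mathbf{B}$ by the congruence of the principal filter $[i)$; - maps $p_{ij}(a/[i))=a/[j)$ for $j\le_{\mathbf{B}}i$. In a Płonka sum, operations are computed by mapping the arguments via the $p_{ij}$ into the fibre indexed by the join of their indices. $J_2$ sends $a/[i)$ to the unique element of the bottom fibre $\mathbf{B}/[1)\cong\mathbf{B}$ below $i$ that is congruent to $a$ modulo $[i)$. *)

theory Defs
  imports Main
begin

text \<open>Boolean algebras are the instances of the type class boolean_algebra.
 A Bochvar system is a pair (B, I) with B a Boolean algebra (a type) and I a subset
 containing top and closed under meet.\<close>

definition bochvar_system :: "'a::boolean_algebra set \<Rightarrow> bool" where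
  "bochvar_system I \<longleftrightarrow> top \<in> I \<and> (\<forall>x\<in>I. \<forall>y\<in>I. inf x y \<in> I)"

definition bool_hom :: "('a::boolean_algebra \<Rightarrow> 'b::boolean_algebra) \<Rightarrow> bool" where
  "bool_hom g \<longleftrightarrow> (\<forall>x y. g (inf x y) = inf (g x) (g y)) \<and> (\<forall>x y. g (sup x y) = sup (g x) (g y))
     \<and> (\<forall>x. g (- x) = - g x) \<and> g bot = bot \<and> g top = top"

definition sys_morphism :: "'a::boolean_algebra set \<Rightarrow> 'b::boolean_algebra set \<Rightarrow> ('a \<Rightarrow> 'b) \<Rightarrow> bool" where
  "sys_morphism I1 I2 g \<longleftrightarrow> bool_hom g \<and> g ` I1 \<subseteq> I2"

definition pfilter :: "'a::boolean_algebra \<Rightarrow> 'a set" where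
  "pfilter i = {f. i \<le> f}"

definition fcong :: "'a::boolean_algebra set \<Rightarrow> 'a \<Rightarrow> 'a \<Rightarrow> bool" where
  "fcong F a b \<longleftrightarrow> (\<exists>f\<in>F. inf a f = inf b f)"

definition qcls :: "'a::boolean_algebra \<Rightarrow> 'a \<Rightarrow> 'a set" where
  "qcls i a = {b. fcong (pfilter i) a b}"

text \<open>Elements of A_B: pairs (i, a/[i)) with i in I (the fibre index and a class).\<close>

definition carrierA :: "'a::boolean_algebra set \<Rightarrow> ('a \<times> 'a set) set" where
  "carrierA I = {(i, qcls i a) | i a. i \<in> I}"

definition rep :: "'a set \<Rightarrow> 'a" where
  "rep x = (SOME a. a \<in> x)"

definition ptrans :: "'a::boolean_algebra \<Rightarrow> 'a set \<Rightarrow> 'a set" where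
  "ptrans j x = qcls j (rep x)"

text \<open>Join of indices in I ordered dually to B is the meet in B.\<close>
definition meetA :: "('a::boolean_algebra \<times> 'a set) \<Rightarrow> ('a \<times> 'a set) \<Rightarrow> ('a \<times> 'a set)" where
  "meetA p q = (let k = inf (fst p) (fst q) in
     (k, qcls k (inf (rep (ptrans k (snd p))) (rep (ptrans k (snd q))))))"

definition joinA :: "('a::boolean_algebra \<times> 'a set) \<Rightarrow> ('a \<times> 'a set) \<Rightarrow> ('a \<times> 'a set)" where
  "joinA p q = (let k = inf (fst p) (fst q) in
     (k, qcls k (sup (rep (ptrans k (snd p))) (rep (ptrans k (snd q))))))"

definition negA :: "('a::boolean_algebra \<times> 'a set) \<Rightarrow> ('a \<times> 'a set)" where
  "negA p = (fst p, qcls (fst p) (- rep (snd p)))"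

definition J2A :: "('a::boolean_algebra \<times> 'a set) \<Rightarrow> ('a \<times> 'a set)" where
  "J2A p = (top, qcls top (THE c. c \<le> fst p \<and> fcong (pfilter (fst p)) c (rep (snd p))))"

definition zeroA :: "'a::boolean_algebra \<times> 'a set" where
  "zeroA = (top, qcls top bot)"

definition oneA :: "'a::boolean_algebra \<times> 'a set" where
  "oneA = (top, qcls top top)"

definition homA :: "'a::boolean_algebra set \<Rightarrow> 'b::boolean_algebra set
    \<Rightarrow> (('a \<times> 'a set) \<Rightarrow> ('b \<times> 'b set)) \<Rightarrow> bool" where
  "homA I1 I2 h \<longleftrightarrow> (\<forall>p\<in>carrierA I1. h p \<in> carrierA I2)
    \<and> (\<forall>p\<in>carrierA I1. \<forall>q\<in>carrierA I1. h (meetA p q) = meetA (h p) (h q))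
    \<and> (\<forall>p\<in>carrierA I1. \<forall>q\<in>carrierA I1. h (joinA p q) = joinA (h p) (h q))
    \<and> (\<forall>p\<in>carrierA I1. h (negA p) = negA (h p))
    \<and> (\<forall>p\<in>carrierA I1. h (J2A p) = J2A (h p))
    \<and> h zeroA = zeroA \<and> h oneA = oneA"

definition Xi :: "('a::boolean_algebra \<Rightarrow> 'b::boolean_algebra) \<Rightarrow> ('a \<times> 'a set) \<Rightarrow> ('b \<times> 'b set)" where
  "Xi g p = (g (fst p), qcls (g (fst p)) (g (rep (snd p))))"

end

theory Submission
  imports Defs
begin

text \<open>Modulo the principal filter \<open>[i)\<close>, an element \<open>a\<close> is determined by \<open>a \<sqinter> i\<close>.
  Each operation of \<open>A_B\<close>, evaluated on a representative \<open>(i, a/[i))\<close>, is therefore a Boolean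
  term in \<open>a\<close> and the index: the binary operations move to the fibre of \<open>i \<sqinter> j\<close> and act there
  on representatives, negation acts fibrewise, and \<open>J\<^sub>2\<close> sends \<open>a/[i)\<close> to \<open>a \<sqinter> i\<close> in the
  bottom fibre. A Boolean homomorphism \<open>g\<close> commutes with all these terms, so
  \<open>a/[i) \<mapsto> g a/[g i)\<close> is independent of the representative and a homomorphism, and
  functoriality is immediate from this formula.\<close>

lemma fcong_pfilter_iff: "fcong (pfilter i) a b \<longleftrightarrow> inf a i = inf b i"
proof
  assume "fcong (pfilter i) a b"
  then obtain f where "i \<le> f" "inf a f = inf b f"
    by (auto simp: fcong_def pfilter_def)
  then show "inf a i = inf b i"
    by (metis inf.absorb_iff2 inf_assoc)
qed (auto simp: fcong_def pfilter_def)

lemma qcls_eq: "qcls i a = {b. inf b i = inf a i}"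
  unfolding qcls_def fcong_pfilter_iff by auto

lemma qcls_eq_iff: "qcls i a = qcls i b \<longleftrightarrow> inf a i = inf b i"
  unfolding qcls_eq by auto

lemma inf_rep_qcls: "inf (rep (qcls i a)) i = inf a i"
proof -
  have "a \<in> qcls i a"
    by (simp add: qcls_eq)
  then have "rep (qcls i a) \<in> qcls i a"
    unfolding rep_def by (rule someI)
  then show ?thesis
    by (simp add: qcls_eq)
qed

lemma ptrans_qcls: "k \<le> i \<Longrightarrow> ptrans k (qcls i a) = qcls k a"
  unfolding ptrans_def qcls_eq_iff by (metis inf.absorb_iff2 inf_assoc inf_rep_qcls)

lemma inf_rep_ptrans_qcls: "k \<le> i \<Longrightarrow> inf (rep (ptrans k (qcls i a))) k = inf a k"
  by (simp add: ptrans_qcls inf_rep_qcls)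

lemma meetA_qcls: "meetA (i, qcls i a) (j, qcls j b) = (inf i j, qcls (inf i j) (inf a b))"
proof -
  let ?k = "inf i j"
  have "inf (rep (ptrans ?k (qcls i a))) ?k = inf a ?k"
    and "inf (rep (ptrans ?k (qcls j b))) ?k = inf b ?k"
    by (simp_all add: inf_rep_ptrans_qcls)
  then show ?thesis
    unfolding meetA_def Let_def by (simp add: qcls_eq_iff) (metis inf_assoc inf_commute inf_left_commute)
qed

lemma joinA_qcls: "joinA (i, qcls i a) (j, qcls j b) = (inf i j, qcls (inf i j) (sup a b))"
proof -
  let ?k = "inf i j"
  have "inf (rep (ptrans ?k (qcls i a))) ?k = inf a ?k"
    and "inf (rep (ptrans ?k (qcls j b))) ?k = inf b ?k"
    by (simp_all add: inf_rep_ptrans_qcls)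
  then show ?thesis
    unfolding joinA_def Let_def by (simp add: qcls_eq_iff inf_sup_distrib2)
qed

lemma inf_compl_inf_right: "inf (- inf a i) i = inf (- a) i" for a i :: "'a::boolean_algebra"
  by (simp add: inf_sup_distrib2)

lemma negA_qcls: "negA (i, qcls i a) = (i, qcls i (- a))"
proof -
  have "inf (- rep (qcls i a)) i = inf (- inf (rep (qcls i a)) i) i"
    by (rule inf_compl_inf_right[symmetric])
  also have "\<dots> = inf (- a) i"
    by (simp only: inf_rep_qcls inf_compl_inf_right)
  finally show ?thesis
    unfolding negA_def by (simp add: qcls_eq_iff)
qed

lemma J2A_qcls: "J2A (i, qcls i a) = (top, qcls top (inf a i))"
proof -
  have "(THE c. c \<le> i \<and> fcong (pfilter i) c (rep (qcls i a))) = inf a i"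
  proof (rule the_equality)
    show "inf a i \<le> i \<and> fcong (pfilter i) (inf a i) (rep (qcls i a))"
      by (simp add: fcong_pfilter_iff inf_rep_qcls inf_assoc)
  next
    fix c
    assume "c \<le> i \<and> fcong (pfilter i) c (rep (qcls i a))"
    then show "c = inf a i"
      by (simp add: fcong_pfilter_iff inf_rep_qcls) (metis inf.absorb1)
  qed
  then show ?thesis
    unfolding J2A_def by simp
qed

lemma bool_hom_id: "bool_hom id"
  by (simp add: bool_hom_def)

lemma bool_hom_comp: "bool_hom g \<Longrightarrow> bool_hom h \<Longrightarrow> bool_hom (h \<circ> g)"
  unfolding bool_hom_def by simp

lemma Xi_qcls:
  assumes "bool_hom g"
  shows "Xi g (i, qcls i a) = (g i, qcls (g i) (g a))"
proof -
  have "g (inf (rep (qcls i a)) i) = g (inf a i)"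
    by (simp add: inf_rep_qcls)
  with assms show ?thesis
    unfolding Xi_def bool_hom_def by (simp add: qcls_eq_iff)
qed

lemma carrierA_cases:
  assumes "p \<in> carrierA I"
  obtains i a where "p = (i, qcls i a)" and "i \<in> I"
  using assms unfolding carrierA_def by blast

lemma homA_Xi:
  assumes "sys_morphism I1 I2 g"
  shows "homA I1 I2 (Xi g)"
proof -
  have g: "bool_hom g" and gI: "g ` I1 \<subseteq> I2"
    using assms by (auto simp: sys_morphism_def)
  have g_ops: "g (inf x y) = inf (g x) (g y)" "g (sup x y) = sup (g x) (g y)"
      "g (- x) = - g x" "g bot = bot" "g top = top" for x y
    using g by (auto simp: bool_hom_def)
  note Xi_g = Xi_qcls[OF g]
  show ?thesis
    unfolding homA_def
  proof (intro conjI ballI)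
    fix p
    assume "p \<in> carrierA I1"
    then show "Xi g p \<in> carrierA I2"
      by (rule carrierA_cases) (use gI in \<open>auto simp: Xi_g carrierA_def\<close>)
  next
    fix p q
    assume "p \<in> carrierA I1" "q \<in> carrierA I1"
    then show "Xi g (meetA p q) = meetA (Xi g p) (Xi g q)"
      and "Xi g (joinA p q) = joinA (Xi g p) (Xi g q)"
      by (auto elim!: carrierA_cases simp: Xi_g meetA_qcls joinA_qcls g_ops)
  next
    fix p
    assume "p \<in> carrierA I1"
    then show "Xi g (negA p) = negA (Xi g p)" and "Xi g (J2A p) = J2A (Xi g p)"
      by (auto elim!: carrierA_cases simp: Xi_g negA_qcls J2A_qcls g_ops)
  qed (simp_all add: zeroA_def oneA_def Xi_g g_ops)
qed

lemma Xi_id: "p \<in> carrierA I \<Longrightarrow> Xi id p = p"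
  by (auto elim!: carrierA_cases simp: Xi_qcls[OF bool_hom_id])

lemma Xi_comp:
  assumes "bool_hom g" and "bool_hom h" and "p \<in> carrierA I"
  shows "Xi (h \<circ> g) p = Xi h (Xi g p)"
  using assms(3)
  by (auto elim!: carrierA_cases simp: Xi_qcls assms(1,2) bool_hom_comp[OF assms(1,2)])

text \<open>Closure of the index sets under meets is needed for \<open>A_B\<close> to be closed under its
  operations, but not for \<open>Xi g\<close> to commute with them.\<close>

theorem lemma3p8:
  fixes I1 :: "'a::boolean_algebra set" and I2 :: "'b::boolean_algebra set"
    and I3 :: "'c::boolean_algebra set"
    and g :: "'a \<Rightarrow> 'b" and h :: "'b \<Rightarrow> 'c"
  assumes "bochvar_system I1" and "bochvar_system I2" and "bochvar_system I3"
    and "sys_morphism I1 I2 g" and "sys_morphism I2 I3 h"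
  shows "(\<forall>i\<in>I1. \<forall>a. Xi g (i, qcls i a) = (g i, qcls (g i) (g a)))
    \<and> homA I1 I2 (Xi g)
    \<and> (\<forall>p\<in>carrierA I1. Xi (id :: 'a \<Rightarrow> 'a) p = p)
    \<and> (\<forall>p\<in>carrierA I1. Xi (h \<circ> g) p = Xi h (Xi g p))"
proof -
  have g: "bool_hom g" and h: "bool_hom h"
    using assms(4,5) by (simp_all add: sys_morphism_def)
  show ?thesis
    using Xi_qcls[OF g] homA_Xi[OF assms(4)] Xi_id Xi_comp[OF g h] by blast
qed

end
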